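(* Let $C\subseteq 2^X$ be an ample class and let $r:C\to X(C)$ be a bijection. The following are equivalent: (R1) for all distinct $c',c''\in C$, $c'|(r(c')\cup r(c''))\ne c''|(r(c')\cup r(c''))$; (R2) for every sample $s$ realizable by $C$ there is a unique $c\in C$ consistent with $s$ such that $r(c)\subseteq\mathrm{dom}(s)$; (R3) for every cube $B$ of $2^X$, the map $c\mapsto r(c)\cap\mathrm{supp}(B)$ from $C\cap B$ to $X(C\cap B)$ is injective; (R4) for all distinct $c',c''\in C$, $c'|(r(c')\Delta r(c''))\ne c''|(r(c')\Delta r(c''))$. Moreover, any map $r:C\to X(C)$ satisfying (R4) is bijective and is therefore a representation map. Furthermore, if $r$ is a representation map for $C$, then there exists an unlabeled sample compression scheme for $C$ of size equal to the VC-dimension of $C$.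
   Context: $X$ is a finite set; concepts $c\subseteq X$ are identified with characteristic functions, $c|Y$ is restriction to $Y$, $C|Y=\{c|Y:c\in C\}$. $Y$ is shattered by $C$ if $C|Y=2^Y$; VC-dimension is the maximum size of a shattered set. A cube of $2^X$ is $\{T\cup Z:Z\subseteq Y\}$ with $Y\subseteq X$, $T\subseteq X\setminus Y$, support $\mathrm{supp}=Y$. $C$ is ample if every shattered set is the support of a cube contained in $C$; then $X(C)$ is the family of shattered sets and $|X(C)|=|C|$ (for a cube $B$, $C\cap B$ is again ample). A representation map is a bijection $r:C\to X(C)$ satisfying (R1). A labeled sample is a sequence $s=(x_1,y_1),\dots,(x_m,y_m)$, $x_i\in X$, $y_i\in\{0,1\}$, with $\mathrm{dom}(s)=\{x_1,\dots,x_m\}$; $c$ is consistent with $s$ if $c(x_i)=y_i$ for all $i$; $s$ is realizable by $C$ if some $c\in C$ is consistent with it; $\mathrm{RS}(C)$ is the set of realizable samples. An unlabeled sample compression scheme of size $k$ is a pair $\alpha:\mathrm{RS}(C)\to\{Z\subseteq X:|Z|\le k\}$, $\beta:\alpha(\mathrm{RS}(C))\to C$ with $\alpha(s)\subseteq\mathrm{dom}(s)$ and $\beta(\alpha(s))$ consistent with $s$ for all $s\in\mathrm{RS}(C)$. *)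

theory Defs
  imports Main
begin

text \<open>Concepts over a finite ground set X are represented as subsets of X
(identified with their characteristic functions); restriction c|Y is c \<inter> Y.\<close>

definition restr :: "'a set \<Rightarrow> 'a set \<Rightarrow> 'a set" where
  "restr c Y = c \<inter> Y"

definition restr_class :: "'a set set \<Rightarrow> 'a set \<Rightarrow> 'a set set" where
  "restr_class C Y = (\<lambda>c. restr c Y) ` C"

definition shatters :: "'a set set \<Rightarrow> 'a set \<Rightarrow> bool" where
  "shatters C Y \<longleftrightarrow> restr_class C Y = Pow Y"

definition shattered_sets :: "'a set \<Rightarrow> 'a set set \<Rightarrow> 'a set set" where
  "shattered_sets X C = {Y. Y \<subseteq> X \<and> shatters C Y}"

definition vc_dim :: "'a set \<Rightarrow> 'a set set \<Rightarrow> nat" where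
  "vc_dim X C = Max (card ` shattered_sets X C)"

definition cube :: "'a set \<Rightarrow> 'a set \<Rightarrow> 'a set set" where
  "cube Y T = {T \<union> Z | Z. Z \<subseteq> Y}"

definition is_cube_of :: "'a set \<Rightarrow> 'a set \<Rightarrow> 'a set \<Rightarrow> bool" where
  "is_cube_of X Y T \<longleftrightarrow> Y \<subseteq> X \<and> T \<subseteq> X - Y"

definition ample :: "'a set \<Rightarrow> 'a set set \<Rightarrow> bool" where
  "ample X C \<longleftrightarrow> (\<forall>Y \<in> shattered_sets X C. \<exists>T. is_cube_of X Y T \<and> cube Y T \<subseteq> C)"

type_synonym 'a sample = "('a \<times> bool) list"

definition sdom :: "'a sample \<Rightarrow> 'a set" where
  "sdom s = fst ` set s"

definition consistent :: "'a set \<Rightarrow> 'a sample \<Rightarrow> bool" where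
  "consistent c s \<longleftrightarrow> (\<forall>(x, y) \<in> set s. (x \<in> c) = y)"

definition RS :: "'a set \<Rightarrow> 'a set set \<Rightarrow> 'a sample set" where
  "RS X C = {s. sdom s \<subseteq> X \<and> (\<exists>c \<in> C. consistent c s)}"

definition R1 :: "'a set set \<Rightarrow> ('a set \<Rightarrow> 'a set) \<Rightarrow> bool" where
  "R1 C r \<longleftrightarrow> (\<forall>c1 \<in> C. \<forall>c2 \<in> C. c1 \<noteq> c2 \<longrightarrow>
      restr c1 (r c1 \<union> r c2) \<noteq> restr c2 (r c1 \<union> r c2))"

definition R2 :: "'a set \<Rightarrow> 'a set set \<Rightarrow> ('a set \<Rightarrow> 'a set) \<Rightarrow> bool" where
  "R2 X C r \<longleftrightarrow> (\<forall>s \<in> RS X C. \<exists>!c. c \<in> C \<and> consistent c s \<and> r c \<subseteq> sdom s)"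

definition R3 :: "'a set \<Rightarrow> 'a set set \<Rightarrow> ('a set \<Rightarrow> 'a set) \<Rightarrow> bool" where
  "R3 X C r \<longleftrightarrow> (\<forall>Y T. is_cube_of X Y T \<longrightarrow> inj_on (\<lambda>c. r c \<inter> Y) (C \<inter> cube Y T))"

definition R4 :: "'a set set \<Rightarrow> ('a set \<Rightarrow> 'a set) \<Rightarrow> bool" where
  "R4 C r \<longleftrightarrow> (\<forall>c1 \<in> C. \<forall>c2 \<in> C. c1 \<noteq> c2 \<longrightarrow>
      restr c1 ((r c1 - r c2) \<union> (r c2 - r c1)) \<noteq> restr c2 ((r c1 - r c2) \<union> (r c2 - r c1)))"

definition representation_map :: "'a set \<Rightarrow> 'a set set \<Rightarrow> ('a set \<Rightarrow> 'a set) \<Rightarrow> bool" where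
  "representation_map X C r \<longleftrightarrow> bij_betw r C (shattered_sets X C) \<and> R1 C r"

definition unlabeled_SCS ::
  "'a set \<Rightarrow> 'a set set \<Rightarrow> nat \<Rightarrow> ('a sample \<Rightarrow> 'a set) \<Rightarrow> ('a set \<Rightarrow> 'a set) \<Rightarrow> bool" where
  "unlabeled_SCS X C k \<alpha> \<beta> \<longleftrightarrow> (\<forall>s \<in> RS X C.
      \<alpha> s \<subseteq> X \<and> card (\<alpha> s) \<le> k \<and> \<alpha> s \<subseteq> sdom s \<and>
      \<beta> (\<alpha> s) \<in> C \<and> consistent (\<beta> (\<alpha> s)) s)"

end

theory Submission
  imports Defs
begin

text \<open>Everything rests on the sandwich theorem: a class D inside a finite cube strongly shatters
  at most card D sets and shatters at least card D sets, and D is ample exactly when both counts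
  agree. Its inductive proof splits D along a coordinate, so ampleness passes to both halves and
  hence to every subcube; it also passes to projections.

  Let r be a bijection from C onto its shattered sets. Under R1 the trace map c \<mapsto> c \<inter> D is
  injective on the concepts represented inside D; there are as many of these as shattered subsets
  of D, i.e. as traces on D, so the trace map is onto, which is R2. Applied to the ample class
  C \<inter> B for a cube B with support Y, this says that for every Z \<subseteq> Y the concepts c with
  r c \<inter> Y \<subseteq> Z are as many as the subsets of Z shattered by C \<inter> B; by Moebius inversion
  each fibre of c \<mapsto> r c \<inter> Y has at most one element, which is R3. Two distinct concepts span
  a cube supported on their symmetric difference, so R3 gives R4, and R4 gives R1 as well as
  injectivity of r, hence bijectivity because C has as many shattered sets as elements. Finally
  R2 turns r into an unlabeled compression scheme: compress a sample to r c for the unique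
  consistent c represented inside its domain, and decompress by inverting r.\<close>

section \<open>Shattering and cubes\<close>

text \<open>Shattering and ampleness without reference to a ground set, which changes when passing
  to projections.\<close>

definition shattered :: "'a set set \<Rightarrow> 'a set set" where
  "shattered D = {Y. shatters D Y}"

definition strongly_shattered :: "'a set set \<Rightarrow> 'a set set" where
  "strongly_shattered D = {Y. \<exists>T. T \<inter> Y = {} \<and> cube Y T \<subseteq> D}"

definition ample_class :: "'a set set \<Rightarrow> bool" where
  "ample_class D \<longleftrightarrow> shattered D \<subseteq> strongly_shattered D"

lemma shatters_iff: "shatters D Y \<longleftrightarrow> (\<forall>Z\<subseteq>Y. \<exists>c\<in>D. c \<inter> Y = Z)"
proof
  assume "shatters D Y"
  then have "Z \<in> (\<lambda>c. c \<inter> Y) ` D" if "Z \<subseteq> Y" for Z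
    using that unfolding shatters_def restr_class_def restr_def by blast
  then show "\<forall>Z\<subseteq>Y. \<exists>c\<in>D. c \<inter> Y = Z"
    by blast
next
  assume "\<forall>Z\<subseteq>Y. \<exists>c\<in>D. c \<inter> Y = Z"
  then have "Pow Y \<subseteq> (\<lambda>c. c \<inter> Y) ` D"
    by (auto simp: image_iff)
  then show "shatters D Y"
    unfolding shatters_def restr_class_def restr_def by blast
qed

lemma mem_shattered_iff: "Y \<in> shattered D \<longleftrightarrow> (\<forall>Z\<subseteq>Y. \<exists>c\<in>D. c \<inter> Y = Z)"
  by (simp add: shattered_def shatters_iff)

lemma shatteredI: "(\<And>Z. Z \<subseteq> Y \<Longrightarrow> \<exists>c\<in>D. c \<inter> Y = Z) \<Longrightarrow> Y \<in> shattered D"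
  by (simp add: mem_shattered_iff)

lemma shatteredE:
  assumes "Y \<in> shattered D" and "Z \<subseteq> Y"
  obtains c where "c \<in> D" and "c \<inter> Y = Z"
  using assms by (meson mem_shattered_iff)

lemma shattered_mono: "D \<subseteq> D' \<Longrightarrow> shattered D \<subseteq> shattered D'"
  by (meson mem_shattered_iff subsetD subsetI)

lemma shattered_empty: "shattered {} = {}"
  by (auto simp: mem_shattered_iff)

lemma mem_cube_iff: "c \<in> cube Y T \<longleftrightarrow> (\<exists>Z\<subseteq>Y. c = T \<union> Z)"
  unfolding cube_def by blast

lemma cube_mono: "Y \<subseteq> Y' \<Longrightarrow> cube Y T \<subseteq> cube Y' T"
  unfolding cube_def by blast

lemma cube_empty_base: "cube Y {} = Pow Y"
  unfolding cube_def by blast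

lemma finite_cube:
  assumes "finite Y"
  shows "finite (cube Y T)"
proof -
  have "cube Y T = (\<union>) T ` Pow Y"
    unfolding cube_def by blast
  with assms show ?thesis
    by simp
qed

lemma strongly_shattered_subset_shattered: "strongly_shattered D \<subseteq> shattered D"
proof
  fix Y assume "Y \<in> strongly_shattered D"
  then obtain T where T: "T \<inter> Y = {}" "cube Y T \<subseteq> D"
    unfolding strongly_shattered_def by blast
  show "Y \<in> shattered D"
  proof (rule shatteredI)
    fix Z assume "Z \<subseteq> Y"
    then have "T \<union> Z \<in> cube Y T"
      unfolding mem_cube_iff by blast
    with T(2) have "T \<union> Z \<in> D"
      by blast
    moreover have "(T \<union> Z) \<inter> Y = Z"
      using T(1) \<open>Z \<subseteq> Y\<close> by blast
    ultimately show "\<exists>c\<in>D. c \<inter> Y = Z"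
      by blast
  qed
qed

lemma shattered_subset_Pow:
  assumes "D \<subseteq> cube F T"
  shows "shattered D \<subseteq> Pow F"
proof
  fix Y assume Y: "Y \<in> shattered D"
  show "Y \<in> Pow F"
  proof (rule PowI, rule subsetI)
    fix x assume "x \<in> Y"
    obtain c1 c2 where "c1 \<in> D" "c1 \<inter> Y = Y" "c2 \<in> D" "c2 \<inter> Y = {}"
      using Y by (meson empty_subsetI order_refl shatteredE)
    then have "c1 \<in> cube F T" "c2 \<in> cube F T"
      using assms by blast+
    then obtain Z1 Z2 where "Z1 \<subseteq> F" "c1 = T \<union> Z1" "c2 = T \<union> Z2"
      unfolding mem_cube_iff by blast
    with \<open>x \<in> Y\<close> \<open>c1 \<inter> Y = Y\<close> \<open>c2 \<inter> Y = {}\<close> show "x \<in> F"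
      by blast
  qed
qed

lemma shattered_subset_Pow_ground: "C \<subseteq> Pow X \<Longrightarrow> shattered C \<subseteq> Pow X"
  using shattered_subset_Pow[of C X "{}"] by (simp add: cube_empty_base)

lemma bij_betw_shattered_imp_subset:
  "C \<subseteq> Pow X \<Longrightarrow> bij_betw r C (shattered C) \<Longrightarrow> c \<in> C \<Longrightarrow> r c \<subseteq> X"
  by (meson PowD bij_betw_apply shattered_subset_Pow_ground subsetD)

lemma finite_shattered: "finite F \<Longrightarrow> D \<subseteq> cube F T \<Longrightarrow> finite (shattered D)"
  by (meson finite_Pow_iff finite_subset shattered_subset_Pow)

lemma finite_strongly_shattered: "finite F \<Longrightarrow> D \<subseteq> cube F T \<Longrightarrow> finite (strongly_shattered D)"
  by (meson finite_shattered finite_subset strongly_shattered_subset_shattered)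

lemma cube_insert_filter:
  assumes "D \<subseteq> cube (insert x F) T"
  shows "{c\<in>D. x \<notin> c} \<subseteq> cube F T" and "{c\<in>D. x \<in> c} \<subseteq> cube F (insert x T)"
proof -
  have "c \<in> cube F T" if "c \<in> D" "x \<notin> c" for c
  proof -
    have "c \<in> cube (insert x F) T"
      using assms \<open>c \<in> D\<close> by blast
    then obtain Z where "Z \<subseteq> insert x F" "c = T \<union> Z"
      unfolding mem_cube_iff by blast
    with \<open>x \<notin> c\<close> have "Z \<subseteq> F \<and> c = T \<union> Z"
      by blast
    then show ?thesis
      unfolding mem_cube_iff by blast
  qed
  then show "{c\<in>D. x \<notin> c} \<subseteq> cube F T"
    by blast
  have "c \<in> cube F (insert x T)" if "c \<in> D" "x \<in> c" for c
  proof -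
    have "c \<in> cube (insert x F) T"
      using assms \<open>c \<in> D\<close> by blast
    then obtain Z where "Z \<subseteq> insert x F" "c = T \<union> Z"
      unfolding mem_cube_iff by blast
    with \<open>x \<in> c\<close> have "Z - {x} \<subseteq> F \<and> c = insert x T \<union> (Z - {x})"
      by blast
    then show ?thesis
      unfolding mem_cube_iff by blast
  qed
  then show "{c\<in>D. x \<in> c} \<subseteq> cube F (insert x T)"
    by blast
qed

lemma card_filter_mem_split:
  "finite D \<Longrightarrow> card D = card {c\<in>D. x \<notin> c} + card {c\<in>D. x \<in> c}"
  by (subst card_Un_disjoint[symmetric]) (auto intro: arg_cong[where f = card])

section \<open>The sandwich theorem\<close>

lemma not_mem_shattered_filter:
  assumes "Y \<in> shattered {c\<in>D. (x \<in> c) = b}"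
  shows "x \<notin> Y"
proof
  assume "x \<in> Y"
  have "(if b then {} else Y) \<subseteq> Y"
    by simp
  then obtain c where "c \<in> {c\<in>D. (x \<in> c) = b}" "c \<inter> Y = (if b then {} else Y)"
    by (rule shatteredE[OF assms])
  with \<open>x \<in> Y\<close> show False
    by (cases b) auto
qed

lemma insert_mem_shattered:
  assumes "Y \<in> shattered {c\<in>D. x \<notin> c}" and "Y \<in> shattered {c\<in>D. x \<in> c}"
  shows "insert x Y \<in> shattered D"
proof (rule shatteredI)
  fix Z assume "Z \<subseteq> insert x Y"
  then have "Z - {x} \<subseteq> Y"
    by blast
  show "\<exists>c\<in>D. c \<inter> insert x Y = Z"
  proof (cases "x \<in> Z")
    case True
    obtain c where "c \<in> {c\<in>D. x \<in> c}" "c \<inter> Y = Z - {x}"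
      by (rule shatteredE[OF assms(2) \<open>Z - {x} \<subseteq> Y\<close>])
    with True show ?thesis
      by blast
  next
    case False
    obtain c where "c \<in> {c\<in>D. x \<notin> c}" "c \<inter> Y = Z - {x}"
      by (rule shatteredE[OF assms(1) \<open>Z - {x} \<subseteq> Y\<close>])
    with False show ?thesis
      by blast
  qed
qed

text \<open>The sets shattered by one of the two halves, together with the sets insert x Y for Y
  shattered by both, are distinct sets shattered by D.\<close>

lemma card_shattered_split:
  assumes "finite (shattered D)"
  shows "card (shattered {c\<in>D. x \<notin> c}) + card (shattered {c\<in>D. x \<in> c}) \<le> card (shattered D)"
proof -
  let ?S0 = "shattered {c\<in>D. x \<notin> c}" and ?S1 = "shattered {c\<in>D. x \<in> c}"
  have sub: "?S0 \<union> ?S1 \<subseteq> shattered D"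
    by (intro Un_least shattered_mono) auto
  then have fin: "finite ?S0" "finite ?S1"
    using finite_subset[OF sub assms] by simp_all
  have x_notin: "x \<notin> Y" if "Y \<in> ?S0 \<union> ?S1" for Y
    using that not_mem_shattered_filter[of Y D x False] not_mem_shattered_filter[of Y D x True]
    by auto
  have inj: "inj_on (insert x) (?S0 \<inter> ?S1)"
  proof (rule inj_onI)
    fix Y Y' assume "Y \<in> ?S0 \<inter> ?S1" "Y' \<in> ?S0 \<inter> ?S1" and eq: "insert x Y = insert x Y'"
    then have "x \<notin> Y" "x \<notin> Y'"
      using x_notin by blast+
    with eq show "Y = Y'"
      by (metis Diff_insert_absorb)
  qed
  have disj: "(?S0 \<union> ?S1) \<inter> insert x ` (?S0 \<inter> ?S1) = {}"
    using x_notin by blast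
  have "card ?S0 + card ?S1 = card (?S0 \<union> ?S1) + card (insert x ` (?S0 \<inter> ?S1))"
    using card_Un_Int[OF fin] card_image[OF inj] by simp
  also have "\<dots> = card (?S0 \<union> ?S1 \<union> insert x ` (?S0 \<inter> ?S1))"
    using fin disj by (simp add: card_Un_disjoint)
  also have "\<dots> \<le> card (shattered D)"
    using assms sub insert_mem_shattered by (intro card_mono) auto
  finally show ?thesis .
qed

lemma strongly_shattered_split:
  "strongly_shattered D \<subseteq> strongly_shattered {c\<in>D. x \<notin> c} \<union> strongly_shattered {c\<in>D. x \<in> c}
     \<union> insert x ` (strongly_shattered {c\<in>D. x \<notin> c} \<inter> strongly_shattered {c\<in>D. x \<in> c})"
proof
  fix Y assume "Y \<in> strongly_shattered D"
  then obtain T where T: "T \<inter> Y = {}" "cube Y T \<subseteq> D"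
    unfolding strongly_shattered_def by blast
  consider "x \<notin> Y" "x \<in> T" | "x \<notin> Y" "x \<notin> T" | "x \<in> Y"
    by blast
  then show "Y \<in> strongly_shattered {c\<in>D. x \<notin> c} \<union> strongly_shattered {c\<in>D. x \<in> c}
     \<union> insert x ` (strongly_shattered {c\<in>D. x \<notin> c} \<inter> strongly_shattered {c\<in>D. x \<in> c})"
  proof cases
    case 1
    then have "cube Y T \<subseteq> {c\<in>D. x \<in> c}"
      using T(2) unfolding cube_def by blast
    with T(1) show ?thesis
      unfolding strongly_shattered_def by blast
  next
    case 2
    then have "cube Y T \<subseteq> {c\<in>D. x \<notin> c}"
      using T(2) unfolding cube_def by blast
    with T(1) show ?thesis
      unfolding strongly_shattered_def by blast
  next
    case 3
    with T(1) have "x \<notin> T"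
      by blast
    have "cube (Y - {x}) T \<subseteq> D"
      using cube_mono[of "Y - {x}" Y T] T(2) by blast
    moreover have "x \<notin> c" if "c \<in> cube (Y - {x}) T" for c
      using that \<open>x \<notin> T\<close> unfolding mem_cube_iff by blast
    ultimately have "cube (Y - {x}) T \<subseteq> {c\<in>D. x \<notin> c}"
      by blast
    then have "Y - {x} \<in> strongly_shattered {c\<in>D. x \<notin> c}"
      unfolding strongly_shattered_def using T(1) by (intro CollectI exI[of _ T]) blast
    moreover have "cube (Y - {x}) (insert x T) \<subseteq> cube Y T"
      using 3 unfolding cube_def by blast
    then have "cube (Y - {x}) (insert x T) \<subseteq> {c\<in>D. x \<in> c}"
      using T(2) unfolding cube_def by blast
    then have "Y - {x} \<in> strongly_shattered {c\<in>D. x \<in> c}"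
      unfolding strongly_shattered_def using T(1) by (intro CollectI exI[of _ "insert x T"]) blast
    moreover have "Y = insert x (Y - {x})"
      using 3 by blast
    ultimately show ?thesis
      by blast
  qed
qed

lemma card_strongly_shattered_split:
  assumes "finite (strongly_shattered {c\<in>D. x \<notin> c})" "finite (strongly_shattered {c\<in>D. x \<in> c})"
  shows "card (strongly_shattered D)
    \<le> card (strongly_shattered {c\<in>D. x \<notin> c}) + card (strongly_shattered {c\<in>D. x \<in> c})"
proof -
  let ?S0 = "strongly_shattered {c\<in>D. x \<notin> c}" and ?S1 = "strongly_shattered {c\<in>D. x \<in> c}"
  have "card (strongly_shattered D) \<le> card (?S0 \<union> ?S1 \<union> insert x ` (?S0 \<inter> ?S1))"
    using assms by (intro card_mono strongly_shattered_split) auto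
  also have "\<dots> \<le> card (?S0 \<union> ?S1) + card (?S0 \<inter> ?S1)"
    using card_Un_le card_image_le assms by (meson add_le_mono finite_Int le_refl order_trans)
  also have "\<dots> = card ?S0 + card ?S1"
    using card_Un_Int[OF assms] by simp
  finally show ?thesis .
qed

lemma card_le_card_shattered:
  assumes "finite F" and "D \<subseteq> cube F T"
  shows "card D \<le> card (shattered D)"
  using assms
proof (induction F arbitrary: D T rule: finite_induct)
  case empty
  then have "D \<subseteq> {T}"
    unfolding cube_def by blast
  show ?case
  proof (cases "D = {}")
    case False
    then have "{} \<in> shattered D"
      by (intro shatteredI) blast
    then have "1 \<le> card (shattered D)"
      using finite_shattered[OF finite.emptyI empty.prems]
      by (metis One_nat_def Suc_leI card_gt_0_iff empty_iff)
    then show ?thesis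
      using \<open>D \<subseteq> {T}\<close> card_mono[of "{T}" D] by simp
  qed simp
next
  case (insert x F)
  let ?D0 = "{c\<in>D. x \<notin> c}" and ?D1 = "{c\<in>D. x \<in> c}"
  have "finite D"
    using insert.prems finite_cube[of "insert x F"] insert.hyps(1) finite_subset by blast
  then have "card D = card ?D0 + card ?D1"
    by (rule card_filter_mem_split)
  also have "\<dots> \<le> card (shattered ?D0) + card (shattered ?D1)"
    using insert.IH cube_insert_filter[OF insert.prems] by (meson add_le_mono)
  also have "\<dots> \<le> card (shattered D)"
    using finite_shattered[OF _ insert.prems] insert.hyps(1) by (simp add: card_shattered_split)
  finally show ?case .
qed

lemma card_strongly_shattered_le_card:
  assumes "finite F" and "D \<subseteq> cube F T"
  shows "card (strongly_shattered D) \<le> card D"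
  using assms
proof (induction F arbitrary: D T rule: finite_induct)
  case empty
  have "strongly_shattered D \<subseteq> {{}}"
    using strongly_shattered_subset_shattered shattered_subset_Pow[OF empty.prems] by blast
  moreover have "strongly_shattered D = {}" if "D = {}"
    using that strongly_shattered_subset_shattered shattered_empty by blast
  moreover have "finite D"
    using empty.prems finite_cube[of "{}" T] finite_subset by blast
  ultimately show ?case
    using card_mono[of "{{}}" "strongly_shattered D"] card_gt_0_iff[of D] by fastforce
next
  case (insert x F)
  let ?D0 = "{c\<in>D. x \<notin> c}" and ?D1 = "{c\<in>D. x \<in> c}"
  note halves = cube_insert_filter[OF insert.prems]
  have "card (strongly_shattered D) \<le> card (strongly_shattered ?D0) + card (strongly_shattered ?D1)"
    using halves insert.hyps(1) by (intro card_strongly_shattered_split finite_strongly_shattered)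
  also have "\<dots> \<le> card ?D0 + card ?D1"
    using insert.IH halves by (meson add_le_mono)
  also have "\<dots> = card D"
    using finite_subset[OF insert.prems] insert.hyps(1)
    by (simp add: finite_cube card_filter_mem_split[symmetric])
  finally show ?case .
qed

lemma ample_class_iff_card_le:
  assumes "finite (shattered D)"
  shows "ample_class D \<longleftrightarrow> card (shattered D) \<le> card (strongly_shattered D)"
proof
  assume "ample_class D"
  then show "card (shattered D) \<le> card (strongly_shattered D)"
    unfolding ample_class_def using strongly_shattered_subset_shattered[of D] by simp
next
  assume "card (shattered D) \<le> card (strongly_shattered D)"
  then show "ample_class D"
    unfolding ample_class_def using card_seteq[OF assms strongly_shattered_subset_shattered]
    by simp
qed

lemma card_shattered_ample:
  assumes "finite F" and "D \<subseteq> cube F T" and "ample_class D"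
  shows "card (shattered D) = card D"
  using card_le_card_shattered[OF assms(1,2)] card_strongly_shattered_le_card[OF assms(1,2)]
    ample_class_iff_card_le[OF finite_shattered[OF assms(1,2)]] assms(3)
  by linarith

section \<open>Ample classes, subcubes and projections\<close>

text \<open>For ample D all inequalities in the induction step of the sandwich theorem are
  equalities.\<close>

lemma ample_class_filter_mem:
  assumes "finite F" and "D \<subseteq> cube F T" and "ample_class D"
  shows "ample_class {c\<in>D. x \<notin> c}" and "ample_class {c\<in>D. x \<in> c}"
proof -
  let ?D0 = "{c\<in>D. x \<notin> c}" and ?D1 = "{c\<in>D. x \<in> c}"
  have D: "D \<subseteq> cube (insert x F) T"
    using assms(2) cube_mono[of F "insert x F" T] by blast
  note halves = cube_insert_filter[OF D]
  have fin: "finite (shattered ?D0)" "finite (shattered ?D1)" "finite (shattered D)"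
    using finite_shattered halves assms(1,2) by blast+
  have "card (shattered D) \<le> card (strongly_shattered D)"
    using assms(3) ample_class_iff_card_le[OF fin(3)] by blast
  moreover have "card (strongly_shattered D) \<le> card (strongly_shattered ?D0) + card (strongly_shattered ?D1)"
    using halves assms(1) by (intro card_strongly_shattered_split finite_strongly_shattered)
  moreover have "card (strongly_shattered ?D0) \<le> card ?D0" "card (strongly_shattered ?D1) \<le> card ?D1"
    using halves assms(1) by (blast intro: card_strongly_shattered_le_card)+
  moreover have "card ?D0 \<le> card (shattered ?D0)" "card ?D1 \<le> card (shattered ?D1)"
    using halves assms(1) by (blast intro: card_le_card_shattered)+
  moreover have "card (shattered ?D0) + card (shattered ?D1) \<le> card (shattered D)"
    using fin(3) by (rule card_shattered_split)
  ultimately have "card (shattered ?D0) \<le> card (strongly_shattered ?D0)"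
    and "card (shattered ?D1) \<le> card (strongly_shattered ?D1)"
    by linarith+
  with fin(1,2) show "ample_class ?D0" and "ample_class ?D1"
    by (simp_all add: ample_class_iff_card_le)
qed

lemma ample_class_fix_coordinates:
  assumes "finite F" and "D \<subseteq> cube F T" and "ample_class D" and "finite S"
  shows "ample_class {c\<in>D. \<forall>y\<in>S. (y \<in> c) = (y \<in> B)}"
  using assms(4)
proof (induction S rule: finite_induct)
  case empty
  with assms(3) show ?case
    by simp
next
  case (insert x S)
  let ?D = "{c\<in>D. \<forall>y\<in>S. (y \<in> c) = (y \<in> B)}"
  have "?D \<subseteq> cube F T"
    using assms(2) by blast
  note halves = ample_class_filter_mem[OF assms(1) this insert.IH, of x]
  have "{c\<in>D. \<forall>y\<in>insert x S. (y \<in> c) = (y \<in> B)} = {c\<in>?D. (x \<in> c) = (x \<in> B)}"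
    by blast
  with halves show ?case
    by (cases "x \<in> B") simp_all
qed

lemma Int_cube_eq:
  assumes "C \<subseteq> Pow X" and "is_cube_of X Y T"
  shows "C \<inter> cube Y T = {c\<in>C. \<forall>y\<in>X - Y. (y \<in> c) = (y \<in> T)}"
proof -
  have "c \<in> cube Y T \<longleftrightarrow> (\<forall>y\<in>X - Y. (y \<in> c) = (y \<in> T))" if "c \<in> C" for c
  proof
    assume "c \<in> cube Y T"
    with assms(2) show "\<forall>y\<in>X - Y. (y \<in> c) = (y \<in> T)"
      unfolding mem_cube_iff is_cube_of_def by blast
  next
    assume "\<forall>y\<in>X - Y. (y \<in> c) = (y \<in> T)"
    with assms that have "c \<inter> Y \<subseteq> Y \<and> c = T \<union> (c \<inter> Y)"
      unfolding is_cube_of_def by auto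
    then show "c \<in> cube Y T"
      unfolding mem_cube_iff by blast
  qed
  then show ?thesis
    by blast
qed

lemma ample_class_Int_cube:
  assumes "finite X" and "C \<subseteq> Pow X" and "ample_class C" and "is_cube_of X Y T"
  shows "ample_class (C \<inter> cube Y T)"
  using ample_class_fix_coordinates[of X C "{}"] assms
  by (simp add: Int_cube_eq cube_empty_base)

lemma mem_restr_class_iff: "p \<in> restr_class D Z \<longleftrightarrow> (\<exists>c\<in>D. p = c \<inter> Z)"
  unfolding restr_class_def restr_def by blast

lemma restr_class_subset_Pow: "restr_class D Z \<subseteq> Pow Z"
  unfolding restr_class_def restr_def by blast

lemma shattered_restr_class: "shattered (restr_class D Z) = {Y\<in>shattered D. Y \<subseteq> Z}"
proof (intro equalityI subsetI)
  fix Y assume Y: "Y \<in> shattered (restr_class D Z)"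
  then have "Y \<subseteq> Z"
    using shattered_subset_Pow[of "restr_class D Z" Z "{}"] restr_class_subset_Pow
    by (auto simp: cube_empty_base)
  have "\<exists>c\<in>D. c \<inter> Y = W" if W: "W \<subseteq> Y" for W
  proof -
    obtain p where "p \<in> restr_class D Z" "p \<inter> Y = W"
      by (rule shatteredE[OF Y W])
    then obtain c where "c \<in> D" "p = c \<inter> Z"
      unfolding mem_restr_class_iff by blast
    with \<open>p \<inter> Y = W\<close> \<open>Y \<subseteq> Z\<close> show ?thesis
      by blast
  qed
  with \<open>Y \<subseteq> Z\<close> show "Y \<in> {Y\<in>shattered D. Y \<subseteq> Z}"
    by (simp add: shatteredI)
next
  fix Y assume "Y \<in> {Y\<in>shattered D. Y \<subseteq> Z}"
  then have Y: "Y \<in> shattered D" "Y \<subseteq> Z"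
    by simp_all
  have "\<exists>p\<in>restr_class D Z. p \<inter> Y = W" if W: "W \<subseteq> Y" for W
  proof -
    obtain c where "c \<in> D" "c \<inter> Y = W"
      by (rule shatteredE[OF Y(1) W])
    then have "c \<inter> Z \<in> restr_class D Z" and "(c \<inter> Z) \<inter> Y = W"
      using Y(2) unfolding mem_restr_class_iff by blast+
    then show ?thesis
      by blast
  qed
  then show "Y \<in> shattered (restr_class D Z)"
    by (rule shatteredI)
qed

lemma ample_class_restr_class:
  assumes "ample_class D"
  shows "ample_class (restr_class D Z)"
  unfolding ample_class_def
proof
  fix Y assume "Y \<in> shattered (restr_class D Z)"
  then have "Y \<subseteq> Z" and "Y \<in> strongly_shattered D"
    using assms unfolding shattered_restr_class ample_class_def by blast+
  then obtain T where T: "T \<inter> Y = {}" "cube Y T \<subseteq> D"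
    unfolding strongly_shattered_def by blast
  have "cube Y (T \<inter> Z) \<subseteq> restr_class D Z"
  proof
    fix p assume "p \<in> cube Y (T \<inter> Z)"
    then obtain W where "W \<subseteq> Y" "p = (T \<inter> Z) \<union> W"
      unfolding mem_cube_iff by blast
    then have "T \<union> W \<in> D" and "p = (T \<union> W) \<inter> Z"
      using T(2) \<open>Y \<subseteq> Z\<close> unfolding cube_def by blast+
    then show "p \<in> restr_class D Z"
      unfolding mem_restr_class_iff by blast
  qed
  with T(1) show "Y \<in> strongly_shattered (restr_class D Z)"
    unfolding strongly_shattered_def by blast
qed

lemma card_restr_class_ample:
  assumes "finite Z" and "ample_class D"
  shows "card (restr_class D Z) = card {Y\<in>shattered D. Y \<subseteq> Z}"
proof -
  have "card (shattered (restr_class D Z)) = card (restr_class D Z)"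
    using assms restr_class_subset_Pow[of D Z] ample_class_restr_class[OF assms(2)]
    by (intro card_shattered_ample[of Z _ "{}"]) (simp_all add: cube_empty_base)
  then show ?thesis
    by (simp add: shattered_restr_class)
qed

lemma shattered_sets_eq_shattered:
  assumes "C \<subseteq> Pow X"
  shows "shattered_sets X C = shattered C"
  using shattered_subset_Pow_ground[OF assms] unfolding shattered_sets_def shattered_def by blast

lemma ample_imp_ample_class:
  assumes "C \<subseteq> Pow X" and "ample X C"
  shows "ample_class C"
  unfolding ample_class_def
proof
  fix Y assume "Y \<in> shattered C"
  then have "Y \<in> shattered_sets X C"
    using shattered_sets_eq_shattered[OF assms(1)] by simp
  then obtain T where "is_cube_of X Y T" "cube Y T \<subseteq> C"
    using assms(2) unfolding ample_def by blast
  then show "Y \<in> strongly_shattered C"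
    unfolding strongly_shattered_def is_cube_of_def by blast
qed

section \<open>Representation maps\<close>

lemma consistent_iff_agree:
  assumes "consistent c0 s"
  shows "consistent c s \<longleftrightarrow> c \<inter> sdom s = c0 \<inter> sdom s"
proof -
  have "consistent c s \<longleftrightarrow> (\<forall>(x, y)\<in>set s. (x \<in> c) = (x \<in> c0))"
    using assms unfolding consistent_def by auto
  also have "\<dots> \<longleftrightarrow> (\<forall>x\<in>sdom s. (x \<in> c) = (x \<in> c0))"
    unfolding sdom_def by auto
  also have "\<dots> \<longleftrightarrow> c \<inter> sdom s = c0 \<inter> sdom s"
    by blast
  finally show ?thesis .
qed

lemma ex_sample:
  assumes "finite D"
  shows "\<exists>s. sdom s = D \<and> consistent c s"
proof -
  obtain xs where "set xs = D"
    using finite_list[OF assms] by blast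
  then have "sdom (map (\<lambda>x. (x, x \<in> c)) xs) = D \<and> consistent c (map (\<lambda>x. (x, x \<in> c)) xs)"
    unfolding sdom_def consistent_def by force
  then show ?thesis
    by blast
qed

text \<open>A realizable sample matters only through its domain D and the trace on D of any concept
  consistent with it.\<close>

lemma R2_iff_unique_agreeing:
  assumes "finite X"
  shows "R2 X C r \<longleftrightarrow> (\<forall>D\<subseteq>X. \<forall>c0\<in>C. \<exists>!c. c \<in> C \<and> c \<inter> D = c0 \<inter> D \<and> r c \<subseteq> D)"
proof
  assume R2: "R2 X C r"
  show "\<forall>D\<subseteq>X. \<forall>c0\<in>C. \<exists>!c. c \<in> C \<and> c \<inter> D = c0 \<inter> D \<and> r c \<subseteq> D"
  proof (intro allI impI ballI)
    fix D c0 assume "D \<subseteq> X" "c0 \<in> C"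
    obtain s where s: "sdom s = D" "consistent c0 s"
      using ex_sample finite_subset[OF \<open>D \<subseteq> X\<close> assms] by blast
    with \<open>D \<subseteq> X\<close> \<open>c0 \<in> C\<close> have "s \<in> RS X C"
      unfolding RS_def by blast
    with R2 have "\<exists>!c. c \<in> C \<and> consistent c s \<and> r c \<subseteq> sdom s"
      unfolding R2_def by blast
    with s show "\<exists>!c. c \<in> C \<and> c \<inter> D = c0 \<inter> D \<and> r c \<subseteq> D"
      by (simp add: consistent_iff_agree)
  qed
next
  assume unique: "\<forall>D\<subseteq>X. \<forall>c0\<in>C. \<exists>!c. c \<in> C \<and> c \<inter> D = c0 \<inter> D \<and> r c \<subseteq> D"
  show "R2 X C r"
    unfolding R2_def
  proof
    fix s assume "s \<in> RS X C"
    then obtain c0 where "sdom s \<subseteq> X" "c0 \<in> C" "consistent c0 s"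
      unfolding RS_def by blast
    with unique show "\<exists>!c. c \<in> C \<and> consistent c s \<and> r c \<subseteq> sdom s"
      by (simp add: consistent_iff_agree)
  qed
qed

lemma R1_unique:
  assumes "R1 C r" and "c1 \<in> C" and "c2 \<in> C" and "c1 \<inter> D = c2 \<inter> D"
    and "r c1 \<subseteq> D" and "r c2 \<subseteq> D"
  shows "c1 = c2"
proof (rule ccontr)
  assume "c1 \<noteq> c2"
  with assms(1-3) have "c1 \<inter> (r c1 \<union> r c2) \<noteq> c2 \<inter> (r c1 \<union> r c2)"
    unfolding R1_def restr_def by blast
  with assms(4-6) show False
    by blast
qed

text \<open>The concepts represented inside D are as many as the shattered subsets of D, hence, C being
  ample, as many as the traces on D; by R1 the trace map is injective on them.\<close>

lemma R1_bij_betw_restr_class: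
  assumes "finite D" and "ample_class C" and "bij_betw r C (shattered C)" and "R1 C r"
  shows "bij_betw (\<lambda>c. c \<inter> D) {c\<in>C. r c \<subseteq> D} (restr_class C D)"
proof -
  let ?A = "{c\<in>C. r c \<subseteq> D}"
  have "r ` ?A = {Y\<in>r ` C. Y \<subseteq> D}"
    by auto
  also have "\<dots> = {Y\<in>shattered C. Y \<subseteq> D}"
    using bij_betw_imp_surj_on[OF assms(3)] by simp
  finally have "bij_betw r ?A {Y\<in>shattered C. Y \<subseteq> D}"
    by (rule bij_betw_subset[OF assms(3), rotated]) blast
  then have "card ?A = card (restr_class C D)"
    using card_restr_class_ample[OF assms(1,2)] bij_betw_same_card by simp
  moreover have inj: "inj_on (\<lambda>c. c \<inter> D) ?A"
    using R1_unique[OF assms(4)] by (intro inj_onI) blast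
  ultimately have card_eq: "card ((\<lambda>c. c \<inter> D) ` ?A) = card (restr_class C D)"
    by (simp add: card_image)
  have "(\<lambda>c. c \<inter> D) ` ?A \<subseteq> restr_class C D"
    unfolding restr_class_def restr_def by blast
  moreover have "finite (restr_class C D)"
    using restr_class_subset_Pow assms(1) by (meson finite_Pow_iff finite_subset)
  ultimately have "(\<lambda>c. c \<inter> D) ` ?A = restr_class C D"
    using card_eq by (intro card_subset_eq)
  with inj show ?thesis
    by (rule bij_betw_imageI)
qed

lemma R1_ex_agreeing:
  assumes "finite D" and "ample_class C" and "bij_betw r C (shattered C)" and "R1 C r"
    and "c0 \<in> C"
  obtains c where "c \<in> C" and "c \<inter> D = c0 \<inter> D" and "r c \<subseteq> D"
proof -
  have "c0 \<inter> D \<in> restr_class C D"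
    using assms(5) unfolding mem_restr_class_iff by blast
  then have "c0 \<inter> D \<in> (\<lambda>c. c \<inter> D) ` {c\<in>C. r c \<subseteq> D}"
    using bij_betw_imp_surj_on[OF R1_bij_betw_restr_class[OF assms(1-4)]] by simp
  then show ?thesis
    using that by force
qed

lemma R1_ex1_agreeing:
  assumes "finite D" and "ample_class C" and "bij_betw r C (shattered C)" and "R1 C r"
    and "c0 \<in> C"
  shows "\<exists>!c. c \<in> C \<and> c \<inter> D = c0 \<inter> D \<and> r c \<subseteq> D"
proof -
  obtain c where c: "c \<in> C" "c \<inter> D = c0 \<inter> D" "r c \<subseteq> D"
    by (rule R1_ex_agreeing[OF assms])
  show ?thesis
  proof (rule ex1I[of _ c])
    show "c \<in> C \<and> c \<inter> D = c0 \<inter> D \<and> r c \<subseteq> D"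
      using c by blast
  next
    fix c' assume "c' \<in> C \<and> c' \<inter> D = c0 \<inter> D \<and> r c' \<subseteq> D"
    with c show "c' = c"
      using R1_unique[OF assms(4), of c' c D] by simp
  qed
qed

lemma R1_if_ex1_agreeing:
  assumes "\<And>c. c \<in> C \<Longrightarrow> r c \<subseteq> X"
    and "\<And>D c0. D \<subseteq> X \<Longrightarrow> c0 \<in> C \<Longrightarrow> \<exists>!c. c \<in> C \<and> c \<inter> D = c0 \<inter> D \<and> r c \<subseteq> D"
  shows "R1 C r"
  unfolding R1_def restr_def
proof (intro ballI impI notI)
  fix c1 c2 assume c: "c1 \<in> C" "c2 \<in> C" "c1 \<noteq> c2"
    and agree: "c1 \<inter> (r c1 \<union> r c2) = c2 \<inter> (r c1 \<union> r c2)"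
  let ?P = "\<lambda>c. c \<in> C \<and> c \<inter> (r c1 \<union> r c2) = c1 \<inter> (r c1 \<union> r c2) \<and> r c \<subseteq> r c1 \<union> r c2"
  have "\<exists>!c. ?P c"
    using assms c(1,2) by simp
  moreover have "?P c1" and "?P c2"
    using c agree by auto
  ultimately show False
    using c(3) the1_equality by metis
qed

lemma R1_iff_R2:
  assumes "finite X" and "C \<subseteq> Pow X" and "ample_class C" and "bij_betw r C (shattered C)"
  shows "R1 C r \<longleftrightarrow> R2 X C r"
proof -
  have "R1 C r \<longleftrightarrow> (\<forall>D\<subseteq>X. \<forall>c0\<in>C. \<exists>!c. c \<in> C \<and> c \<inter> D = c0 \<inter> D \<and> r c \<subseteq> D)"
  proof
    assume R1: "R1 C r"
    show "\<forall>D\<subseteq>X. \<forall>c0\<in>C. \<exists>!c. c \<in> C \<and> c \<inter> D = c0 \<inter> D \<and> r c \<subseteq> D"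
    proof (intro allI impI ballI)
      fix D c0 assume "D \<subseteq> X" and "c0 \<in> C"
      then show "\<exists>!c. c \<in> C \<and> c \<inter> D = c0 \<inter> D \<and> r c \<subseteq> D"
        by (intro R1_ex1_agreeing[OF finite_subset[OF _ assms(1)] assms(3,4) R1])
    qed
  next
    assume "\<forall>D\<subseteq>X. \<forall>c0\<in>C. \<exists>!c. c \<in> C \<and> c \<inter> D = c0 \<inter> D \<and> r c \<subseteq> D"
    then show "R1 C r"
      by (intro R1_if_ex1_agreeing[OF bij_betw_shattered_imp_subset[OF assms(2,4)]]) simp_all
  qed
  then show ?thesis
    by (simp add: R2_iff_unique_agreeing[OF assms(1)])
qed

lemma card_sublevel_eq_sum_levels:
  assumes "finite A" and "finite W"
  shows "card {a\<in>A. f a \<subseteq> W} = (\<Sum>V\<in>Pow W. card {a\<in>A. f a = V})"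
proof -
  have "{a\<in>A. f a \<subseteq> W} = (\<Union>V\<in>Pow W. {a\<in>A. f a = V})"
    by blast
  also have "card \<dots> = (\<Sum>V\<in>Pow W. card {a\<in>A. f a = V})"
    using assms by (intro card_UN_disjoint) auto
  finally show ?thesis .
qed

text \<open>Moebius inversion on the subset lattice.\<close>

lemma card_level_eq_if_card_sublevel_eq:
  assumes "finite A" and "finite B" and "finite Y"
    and sublevel: "\<And>Z. Z \<subseteq> Y \<Longrightarrow> card {a\<in>A. f a \<subseteq> Z} = card {b\<in>B. g b \<subseteq> Z}"
    and "W \<subseteq> Y"
  shows "card {a\<in>A. f a = W} = card {b\<in>B. g b = W}"
  using assms(5)
proof (induction "card W" arbitrary: W rule: less_induct)
  case less
  have "finite W"
    using less.prems assms(3) finite_subset by blast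
  have "(\<Sum>V\<in>Pow W - {W}. card {a\<in>A. f a = V}) = (\<Sum>V\<in>Pow W - {W}. card {b\<in>B. g b = V})"
  proof (rule sum.cong)
    fix V assume "V \<in> Pow W - {W}"
    then have "V \<subset> W"
      by blast
    with \<open>finite W\<close> less.prems show "card {a\<in>A. f a = V} = card {b\<in>B. g b = V}"
      by (intro less.hyps psubset_card_mono) auto
  qed simp
  moreover have "(\<Sum>V\<in>Pow W. card {a\<in>A. f a = V}) = (\<Sum>V\<in>Pow W. card {b\<in>B. g b = V})"
    using sublevel[OF less.prems] assms(1,2) \<open>finite W\<close> by (simp add: card_sublevel_eq_sum_levels)
  ultimately show ?case
    using \<open>finite W\<close> by (simp add: sum.remove[of "Pow W" W])
qed

lemma mem_Int_cube_iff:
  assumes "C \<subseteq> Pow X" and "is_cube_of X Y T"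
  shows "c \<in> C \<inter> cube Y T \<longleftrightarrow> c \<in> C \<and> c \<inter> (X - Y) = T \<inter> (X - Y)"
  using Int_cube_eq[OF assms] by auto

lemma R1_inj_on_restr_Int_cube:
  assumes "C \<subseteq> Pow X" and "bij_betw r C (shattered C)" and "R1 C r" and "is_cube_of X Y T"
  shows "inj_on (\<lambda>c. c \<inter> Z) {c\<in>C \<inter> cube Y T. r c \<inter> Y \<subseteq> Z}"
proof (rule inj_onI)
  let ?D = "(X - Y) \<union> Z"
  fix c1 c2 assume c1: "c1 \<in> {c\<in>C \<inter> cube Y T. r c \<inter> Y \<subseteq> Z}"
    and c2: "c2 \<in> {c\<in>C \<inter> cube Y T. r c \<inter> Y \<subseteq> Z}" and "c1 \<inter> Z = c2 \<inter> Z"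
  with mem_Int_cube_iff[OF assms(1,4)] have "c1 \<inter> ?D = c2 \<inter> ?D"
    by (simp add: Int_Un_distrib)
  moreover have "r c1 \<subseteq> ?D" and "r c2 \<subseteq> ?D"
    using c1 c2 bij_betw_shattered_imp_subset[OF assms(1,2)] by blast+
  ultimately show "c1 = c2"
    using R1_unique[OF assms(3)] c1 c2 by blast
qed

lemma R1_restr_Int_cube_image:
  assumes "finite X" and "C \<subseteq> Pow X" and "ample_class C" and "bij_betw r C (shattered C)"
    and "R1 C r" and "is_cube_of X Y T" and "Z \<subseteq> Y"
  shows "(\<lambda>c. c \<inter> Z) ` {c\<in>C \<inter> cube Y T. r c \<inter> Y \<subseteq> Z} = restr_class (C \<inter> cube Y T) Z"
proof (intro equalityI subsetI)
  fix p assume "p \<in> (\<lambda>c. c \<inter> Z) ` {c\<in>C \<inter> cube Y T. r c \<inter> Y \<subseteq> Z}"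
  then show "p \<in> restr_class (C \<inter> cube Y T) Z"
    unfolding mem_restr_class_iff by blast
next
  let ?D = "(X - Y) \<union> Z"
  have "?D \<subseteq> X"
    using assms(6,7) unfolding is_cube_of_def by blast
  then have "finite ?D"
    using assms(1) by (rule finite_subset)
  fix p assume "p \<in> restr_class (C \<inter> cube Y T) Z"
  then obtain c0 where c0: "c0 \<in> C \<inter> cube Y T" "p = c0 \<inter> Z"
    unfolding mem_restr_class_iff by blast
  obtain c where c: "c \<in> C" "c \<inter> ?D = c0 \<inter> ?D" "r c \<subseteq> ?D"
    using c0(1) by (blast intro: R1_ex_agreeing[OF \<open>finite ?D\<close> assms(3-5)])
  with c0 mem_Int_cube_iff[OF assms(2,6)] have "c \<in> C \<inter> cube Y T"
    by blast
  moreover from c have "r c \<inter> Y \<subseteq> Z" and "p = c \<inter> Z"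
    using c0(2) by blast+
  ultimately show "p \<in> (\<lambda>c. c \<inter> Z) ` {c\<in>C \<inter> cube Y T. r c \<inter> Y \<subseteq> Z}"
    by blast
qed

lemma R1_card_level_Int_cube:
  assumes "finite X" and "C \<subseteq> Pow X" and "ample_class C" and "bij_betw r C (shattered C)"
    and "R1 C r" and "is_cube_of X Y T" and "W \<subseteq> Y"
  shows "card {c\<in>C \<inter> cube Y T. r c \<inter> Y = W} = card {V\<in>shattered (C \<inter> cube Y T). V = W}"
proof -
  let ?E = "C \<inter> cube Y T"
  have finY: "finite Y"
    using assms(1,6) finite_subset unfolding is_cube_of_def by blast
  have finE: "finite ?E"
    using assms(1,2) by (meson finite_Int finite_Pow_iff finite_subset)
  have ampleE: "ample_class ?E"
    using ample_class_Int_cube[OF assms(1-3,6)] .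
  have finS: "finite (shattered ?E)"
    using finite_shattered[OF finY, of ?E T] by blast
  show ?thesis
  proof (rule card_level_eq_if_card_sublevel_eq[OF finE finS finY _ assms(7)])
    fix Z assume "Z \<subseteq> Y"
    have "card {c\<in>?E. r c \<inter> Y \<subseteq> Z} = card ((\<lambda>c. c \<inter> Z) ` {c\<in>?E. r c \<inter> Y \<subseteq> Z})"
      using card_image[OF R1_inj_on_restr_Int_cube[OF assms(2,4-6)]] by simp
    also have "\<dots> = card (restr_class ?E Z)"
      using R1_restr_Int_cube_image[OF assms(1-6) \<open>Z \<subseteq> Y\<close>] by simp
    also have "\<dots> = card {V\<in>shattered ?E. V \<subseteq> Z}"
      using card_restr_class_ample[OF finite_subset[OF \<open>Z \<subseteq> Y\<close> finY] ampleE] .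
    finally show "card {c\<in>?E. r c \<inter> Y \<subseteq> Z} = card {V\<in>shattered ?E. V \<subseteq> Z}" .
  qed
qed

lemma R1_imp_R3:
  assumes "finite X" and "C \<subseteq> Pow X" and "ample_class C" and "bij_betw r C (shattered C)"
    and "R1 C r"
  shows "R3 X C r"
  unfolding R3_def
proof (intro allI impI inj_onI)
  fix Y T c1 c2 assume cube: "is_cube_of X Y T"
    and c: "c1 \<in> C \<inter> cube Y T" "c2 \<in> C \<inter> cube Y T" and eq: "r c1 \<inter> Y = r c2 \<inter> Y"
  let ?W = "r c1 \<inter> Y" and ?E = "C \<inter> cube Y T"
  have "card {V\<in>shattered ?E. V = ?W} \<le> card {?W}"
    by (intro card_mono) auto
  then have "card {c\<in>?E. r c \<inter> Y = ?W} \<le> Suc 0"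
    using R1_card_level_Int_cube[OF assms cube, of ?W] by simp
  moreover have "c1 \<in> {c\<in>?E. r c \<inter> Y = ?W}" and "c2 \<in> {c\<in>?E. r c \<inter> Y = ?W}"
    using c eq by simp_all
  moreover have "finite C"
    using assms(1,2) by (meson finite_Pow_iff finite_subset)
  then have "finite {c\<in>?E. r c \<inter> Y = ?W}"
    by (rule finite_subset[rotated]) blast
  ultimately show "c1 = c2"
    using card_le_Suc0_iff_eq by blast
qed

text \<open>Two distinct concepts lie in the cube spanned by their symmetric difference.\<close>

lemma R3_imp_R4:
  assumes "C \<subseteq> Pow X" and "R3 X C r"
  shows "R4 C r"
  unfolding R4_def restr_def
proof (intro ballI impI notI)
  fix c1 c2 assume c: "c1 \<in> C" "c2 \<in> C" "c1 \<noteq> c2"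
    and agree: "c1 \<inter> ((r c1 - r c2) \<union> (r c2 - r c1)) = c2 \<inter> ((r c1 - r c2) \<union> (r c2 - r c1))"
  let ?Y = "(c1 - c2) \<union> (c2 - c1)" and ?T = "c1 \<inter> c2"
  have "is_cube_of X ?Y ?T"
    using c assms(1) unfolding is_cube_of_def by blast
  moreover have "c1 \<in> cube ?Y ?T" and "c2 \<in> cube ?Y ?T"
    unfolding mem_cube_iff by (intro exI[of _ "c1 - c2"] exI[of _ "c2 - c1"]; blast)+
  ultimately have "r c1 \<inter> ?Y \<noteq> r c2 \<inter> ?Y"
    using assms(2) c unfolding R3_def inj_on_def by blast
  with agree show False
    by blast
qed

lemma R4_imp_R1: "R4 C r \<Longrightarrow> R1 C r"
  unfolding R4_def R1_def restr_def by blast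

lemma R4_imp_inj_on: "R4 C r \<Longrightarrow> inj_on r C"
  unfolding R4_def restr_def inj_on_def by auto

lemma R4_imp_bij_betw:
  assumes "finite X" and "C \<subseteq> Pow X" and "ample_class C" and "r ` C \<subseteq> shattered C"
    and "R4 C r"
  shows "bij_betw r C (shattered C)"
proof -
  have C: "C \<subseteq> cube X {}"
    using assms(2) by (simp add: cube_empty_base)
  have "card (r ` C) = card (shattered C)"
    using card_image[OF R4_imp_inj_on[OF assms(5)]] card_shattered_ample[OF assms(1) C assms(3)]
    by simp
  then have "r ` C = shattered C"
    using card_subset_eq[OF finite_shattered[OF assms(1) C] assms(4)] by simp
  with R4_imp_inj_on[OF assms(5)] show ?thesis
    by (rule bij_betw_imageI)
qed

lemma unlabeled_SCS_of_R2:
  assumes "finite X" and "bij_betw r C (shattered_sets X C)" and "R2 X C r"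
  shows "unlabeled_SCS X C (vc_dim X C)
    (\<lambda>s. r (THE c. c \<in> C \<and> consistent c s \<and> r c \<subseteq> sdom s)) (the_inv_into C r)"
  unfolding unlabeled_SCS_def
proof
  fix s assume "s \<in> RS X C"
  let ?c = "THE c. c \<in> C \<and> consistent c s \<and> r c \<subseteq> sdom s"
  have c: "?c \<in> C" "consistent ?c s" "r ?c \<subseteq> sdom s"
    using theI'[of "\<lambda>c. c \<in> C \<and> consistent c s \<and> r c \<subseteq> sdom s"] assms(3) \<open>s \<in> RS X C\<close>
    unfolding R2_def by blast+
  have shattered: "r ?c \<in> shattered_sets X C"
    using assms(2) c(1) unfolding bij_betw_def by blast
  have "finite (shattered_sets X C)"
    using assms(1) unfolding shattered_sets_def by simp
  then have "card (r ?c) \<le> vc_dim X C"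
    using shattered unfolding vc_dim_def by simp
  moreover have "r ?c \<subseteq> X"
    using shattered unfolding shattered_sets_def by blast
  moreover have "the_inv_into C r (r ?c) = ?c"
    using assms(2) c(1) by (simp add: bij_betw_def the_inv_into_f_f)
  ultimately show "r ?c \<subseteq> X \<and> card (r ?c) \<le> vc_dim X C \<and> r ?c \<subseteq> sdom s \<and>
      the_inv_into C r (r ?c) \<in> C \<and> consistent (the_inv_into C r (r ?c)) s"
    using c by simp
qed

theorem theorem6p1:
  fixes X :: "'a set" and C :: "'a set set"
  assumes "finite X" and "C \<subseteq> Pow X" and "ample X C"
  shows "(\<forall>r. bij_betw r C (shattered_sets X C) \<longrightarrow>
            (R1 C r \<longleftrightarrow> R2 X C r) \<and> (R1 C r \<longleftrightarrow> R3 X C r) \<and> (R1 C r \<longleftrightarrow> R4 C r))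
       \<and> (\<forall>r. (\<forall>c \<in> C. r c \<in> shattered_sets X C) \<and> R4 C r \<longrightarrow>
            bij_betw r C (shattered_sets X C) \<and> representation_map X C r)
       \<and> (\<forall>r. representation_map X C r \<longrightarrow>
            (\<exists>\<alpha> \<beta>. unlabeled_SCS X C (vc_dim X C) \<alpha> \<beta>))"
proof -
  have ample: "ample_class C"
    using ample_imp_ample_class[OF assms(2,3)] .
  note shattered_eq = shattered_sets_eq_shattered[OF assms(2)]
  have equivalences: "(R1 C r \<longleftrightarrow> R2 X C r) \<and> (R1 C r \<longleftrightarrow> R3 X C r) \<and> (R1 C r \<longleftrightarrow> R4 C r)"
    if "bij_betw r C (shattered_sets X C)" for r
    using that R1_iff_R2[OF assms(1,2) ample] R1_imp_R3[OF assms(1,2) ample]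
      R3_imp_R4[OF assms(2)] R4_imp_R1
    unfolding shattered_eq by blast
  show ?thesis
  proof (rule conjI[OF _ conjI]; intro allI impI)
    fix r assume "bij_betw r C (shattered_sets X C)"
    then show "(R1 C r \<longleftrightarrow> R2 X C r) \<and> (R1 C r \<longleftrightarrow> R3 X C r) \<and> (R1 C r \<longleftrightarrow> R4 C r)"
      by (rule equivalences)
  next
    fix r assume r: "(\<forall>c \<in> C. r c \<in> shattered_sets X C) \<and> R4 C r"
    then have "bij_betw r C (shattered_sets X C)"
      using R4_imp_bij_betw[OF assms(1,2) ample] unfolding shattered_eq by blast
    with r show "bij_betw r C (shattered_sets X C) \<and> representation_map X C r"
      unfolding representation_map_def using R4_imp_R1 by blast
  next
    fix r assume "representation_map X C r"
    then have "bij_betw r C (shattered_sets X C)" and "R2 X C r"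
      using equivalences unfolding representation_map_def by blast+
    then show "\<exists>\<alpha> \<beta>. unlabeled_SCS X C (vc_dim X C) \<alpha> \<beta>"
      using unlabeled_SCS_of_R2[OF assms(1)] by blast
  qed
qed

end
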